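(* Let $G=([N],\mathcal{E})$ be an undirected graph, $\sigma=(\sigma_1,\dots,\sigma_N)\in(0,1)^N$, $\sigma_m=\min_i\sigma_i$, $c>0$ and $q\in(1-\sigma_m,1)$, and let $C\subset[N]$ be a set of compromised clients. Then the distributed mechanism is $\epsilon$-differentially private with respect to the uncompromised clients, with $\epsilon=\frac{q}{c(q+\sigma_m-1)}$: for every $\delta\ge0$, every pair $\theta(0),\theta'(0)\in\mathbb{R}^N$ that differ only in one coordinate $k\notin C$ with $|\theta_k(0)-\theta'_k(0)|\le\delta$, and every measurable set $\mathit{Obs}$ of observation sequences, $$\Pr[\text{observation}\in\mathit{Obs}\mid\theta(0)]\le e^{\epsilon\delta}\Pr[\text{observation}\in\mathit{Obs}\mid\theta'(0)].$$
   Context: Laplace distribution $Lap(b)$: density $\frac{1}{2b}e^{-|x|/b}$. $N(i)=\{j:(i,j)\in\mathcal{E}\}$ is the neighbor set of $i$. Distributed mechanism with parameters $\sigma\in(0,1)^N$, $c>0$, $q\in(0,1)$: each client $i$ has states $\theta_i(t),y_i(t)$ with real initial value $\theta_i(0)$. At each round $t=0,1,2,\dots$: (i) client $i$ sends $x_i(t)=\theta_i(t)+\eta_i(t)$ to every $j\in N(i)$, where the $\eta_i(t)$ ($i\in[N],t\ge0$) are mutually independent with $\eta_i(t)\sim Lap(cq^t)$; (ii) client $i$ sets $y_i(t)=\frac{1}{|N(i)|+1}\sum_{j\in N(i)\cup\{i\}}x_j(t)$; (iii) client $i$ sets $\theta_i(t+1)=(1-\sigma_i)\theta_i(t)+\sigma_i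 y_i(t)$. The adversary's observation is the sequence of all messages $(x_i(t))_{i\in[N],t\ge0}$ together with the internal states $(\theta_j(t),y_j(t))_{t\ge0}$ of every compromised client $j\in C$. *)

theory Defs
  imports "HOL-Probability.Probability"
begin

text \<open>Clients are indexed by 0,...,N-1 (i.e. [N] shifted by one).
  The graph is given by an edge set E of pairs of clients.\<close>

definition undirected_graph :: "nat \<Rightarrow> (nat \<times> nat) set \<Rightarrow> bool" where
  "undirected_graph N E \<longleftrightarrow> E \<subseteq> {..<N} \<times> {..<N} \<and> (\<forall>i j. (i, j) \<in> E \<longrightarrow> (j, i) \<in> E)
     \<and> (\<forall>i. (i, i) \<notin> E)"

definition nbrs :: "(nat \<times> nat) set \<Rightarrow> nat \<Rightarrow> nat set" where
  "nbrs E i = {j. (i, j) \<in> E}"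

definition laplace :: "real \<Rightarrow> real measure" where
  "laplace b = density lborel (\<lambda>x. ennreal (exp (- \<bar>x\<bar> / b) / (2 * b)))"

definition noise_space :: "nat \<Rightarrow> real \<Rightarrow> real \<Rightarrow> (nat \<times> nat \<Rightarrow> real) measure" where
  "noise_space N c q = (\<Pi>\<^sub>M (i, t) \<in> {..<N} \<times> UNIV. laplace (c * q ^ t))"

primrec dtheta :: "(nat \<times> nat) set \<Rightarrow> (nat \<Rightarrow> real) \<Rightarrow> (nat \<Rightarrow> real)
    \<Rightarrow> (nat \<times> nat \<Rightarrow> real) \<Rightarrow> nat \<Rightarrow> nat \<Rightarrow> real" where
  "dtheta E \<sigma> \<theta>0 \<eta> 0 = \<theta>0"
| "dtheta E \<sigma> \<theta>0 \<eta> (Suc t) = (\<lambda>i. (1 - \<sigma> i) * dtheta E \<sigma> \<theta>0 \<eta> t i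
      + \<sigma> i * ((\<Sum>j \<in> nbrs E i \<union> {i}. dtheta E \<sigma> \<theta>0 \<eta> t j + \<eta> (j, t))
                 / (real (card (nbrs E i)) + 1)))"

definition dmsg :: "(nat \<times> nat) set \<Rightarrow> (nat \<Rightarrow> real) \<Rightarrow> (nat \<Rightarrow> real)
    \<Rightarrow> (nat \<times> nat \<Rightarrow> real) \<Rightarrow> nat \<Rightarrow> nat \<Rightarrow> real" where
  "dmsg E \<sigma> \<theta>0 \<eta> t i = dtheta E \<sigma> \<theta>0 \<eta> t i + \<eta> (i, t)"

definition dy :: "(nat \<times> nat) set \<Rightarrow> (nat \<Rightarrow> real) \<Rightarrow> (nat \<Rightarrow> real)
    \<Rightarrow> (nat \<times> nat \<Rightarrow> real) \<Rightarrow> nat \<Rightarrow> nat \<Rightarrow> real" where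
  "dy E \<sigma> \<theta>0 \<eta> t i = (\<Sum>j \<in> nbrs E i \<union> {i}. dmsg E \<sigma> \<theta>0 \<eta> t j) / (real (card (nbrs E i)) + 1)"

text \<open>Observation: all messages (x_i(t)), and the internal states theta_j(t), y_j(t)
  of compromised clients j in C.\<close>
type_synonym observation = "(nat \<times> nat \<Rightarrow> real) \<times> (nat \<times> nat \<Rightarrow> real) \<times> (nat \<times> nat \<Rightarrow> real)"

definition obs_space :: "nat \<Rightarrow> nat set \<Rightarrow> observation measure" where
  "obs_space N C = (\<Pi>\<^sub>M p \<in> {..<N} \<times> UNIV. borel) \<Otimes>\<^sub>M
     ((\<Pi>\<^sub>M p \<in> C \<times> UNIV. borel) \<Otimes>\<^sub>M (\<Pi>\<^sub>M p \<in> C \<times> UNIV. borel))"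

definition observe :: "nat \<Rightarrow> (nat \<times> nat) set \<Rightarrow> nat set \<Rightarrow> (nat \<Rightarrow> real) \<Rightarrow> (nat \<Rightarrow> real)
    \<Rightarrow> (nat \<times> nat \<Rightarrow> real) \<Rightarrow> observation" where
  "observe N E C \<sigma> \<theta>0 \<eta> =
     (restrict (\<lambda>(i, t). dmsg E \<sigma> \<theta>0 \<eta> t i) ({..<N} \<times> UNIV),
      restrict (\<lambda>(j, t). dtheta E \<sigma> \<theta>0 \<eta> t j) (C \<times> UNIV),
      restrict (\<lambda>(j, t). dy E \<sigma> \<theta>0 \<eta> t j) (C \<times> UNIV))"

definition obs_prob :: "nat \<Rightarrow> (nat \<times> nat) set \<Rightarrow> nat set \<Rightarrow> (nat \<Rightarrow> real) \<Rightarrow> real \<Rightarrow> real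
    \<Rightarrow> (nat \<Rightarrow> real) \<Rightarrow> observation set \<Rightarrow> real" where
  "obs_prob N E C \<sigma> c q \<theta>0 Obs =
     measure (noise_space N c q) {\<eta> \<in> space (noise_space N c q). observe N E C \<sigma> \<theta>0 \<eta> \<in> Obs}"

end

theory Submission
  imports Defs
begin

(* Changing the initial value of an uncompromised client k by D can be absorbed into the noise:
   adding (1 - sigma_k)^t * D to eta_k(t) for every t leaves all messages and the states of all
   other clients unchanged, so the event "observation in Obs" for theta(0) is the preimage of the
   same event for theta'(0) under this translation of the noise. Translating a product of Laplace
   laws Lap(b_j) by s multiplies densities by at most exp (sum_j |s_j| / b_j); here the sum is a
   geometric series of ratio (1 - sigma_k) / q < 1, bounded by |D| q / (c (q + sigma_m - 1)).
   On the infinite product the density bound is proved for cylinder sets and extended to the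
   whole product sigma-algebra by approximation. *)

definition laplace_density :: "real \<Rightarrow> real \<Rightarrow> real" where
  "laplace_density b x = exp (- \<bar>x\<bar> / b) / (2 * b)"

lemma laplace_eq_density: "laplace b = density lborel (\<lambda>x. ennreal (laplace_density b x))"
  by (simp add: laplace_def laplace_density_def)

lemma space_laplace [simp]: "space (laplace b) = UNIV"
  by (simp add: laplace_def)

lemma laplace_density_nonneg: "0 < b \<Longrightarrow> 0 \<le> laplace_density b x"
  by (simp add: laplace_density_def)

lemma borel_measurable_laplace_density [measurable]: "laplace_density b \<in> borel_measurable borel"
  unfolding laplace_density_def by measurable

lemma prob_space_laplace:
  assumes b: "0 < b"
  shows "prob_space (laplace b)"
proof (rule prob_spaceI)
  let ?g = "\<lambda>x. ennreal (exponential_density (1 / b) x)"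
  have int_g: "(\<integral>\<^sup>+x. ?g x \<partial>lborel) = 1"
  proof -
    interpret prob_space "density lborel ?g"
      using b by (intro prob_space_exponential_density) simp
    show ?thesis using emeasure_space_1 by (simp add: emeasure_density)
  qed
  have int_g_reflected: "(\<integral>\<^sup>+x. ?g (- x) \<partial>lborel) = 1"
    using nn_integral_real_affine[of ?g "-1" 0] int_g by simp
  have density_AE: "AE x in lborel. ennreal (exp (- \<bar>x\<bar> / b) / (2 * b)) = ennreal (1 / 2) * (?g x + ?g (- x))"
    using AE_lborel_singleton[of 0]
  proof eventually_elim
    case (elim x)
    let ?d = "exponential_density (1 / b)"
    have split: "exp (- \<bar>x\<bar> / b) / (2 * b) = 1 / 2 * (?d x + ?d (- x))"
      using elim by (cases "x < 0") (simp_all add: exponential_density_def)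
    have "ennreal (exp (- \<bar>x\<bar> / b) / (2 * b)) = ennreal (1 / 2) * ennreal (?d x + ?d (- x))"
      unfolding split using b by (intro ennreal_mult) (simp_all add: exponential_density_nonneg)
    also have "ennreal (?d x + ?d (- x)) = ?g x + ?g (- x)"
      using b by (simp add: exponential_density_nonneg ennreal_plus)
    finally show ?case .
  qed
  have "emeasure (laplace b) (space (laplace b)) = (\<integral>\<^sup>+x. ennreal (exp (- \<bar>x\<bar> / b) / (2 * b)) \<partial>lborel)"
    by (simp add: laplace_def emeasure_density)
  also have "\<dots> = (\<integral>\<^sup>+x. ennreal (1 / 2) * (?g x + ?g (- x)) \<partial>lborel)"
    using density_AE by (rule nn_integral_cong_AE)
  also have "\<dots> = ennreal (1 / 2) * ((\<integral>\<^sup>+x. ?g x \<partial>lborel) + (\<integral>\<^sup>+x. ?g (- x) \<partial>lborel))"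
    by (simp add: nn_integral_cmult nn_integral_add)
  finally show "emeasure (laplace b) (space (laplace b)) = 1"
    by (simp add: int_g int_g_reflected mult.commute[of _ 2] flip: divide_ennreal_def)
qed

lemma laplace_density_translate_le:
  assumes b: "0 < b"
  shows "laplace_density b (x - s) \<le> exp (\<bar>s\<bar> / b) * laplace_density b x"
proof -
  have "- \<bar>x - s\<bar> / b \<le> \<bar>s\<bar> / b + - \<bar>x\<bar> / b"
    using b by (simp add: field_simps)
  then have "exp (- \<bar>x - s\<bar> / b) \<le> exp (\<bar>s\<bar> / b) * exp (- \<bar>x\<bar> / b)"
    by (simp flip: exp_add)
  then show ?thesis
    using b by (simp add: laplace_density_def divide_right_mono)
qed

lemma prod_laplace_density_translate_le:
  assumes J: "finite J" and b: "\<And>j. 0 < b j" and W: "(\<Sum>j\<in>J. \<bar>s j\<bar> / b j) \<le> W"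
  shows "(\<Prod>j\<in>J. laplace_density (b j) (x j - s j)) \<le> exp W * (\<Prod>j\<in>J. laplace_density (b j) (x j))"
proof -
  have "(\<Prod>j\<in>J. laplace_density (b j) (x j - s j)) \<le> (\<Prod>j\<in>J. exp (\<bar>s j\<bar> / b j) * laplace_density (b j) (x j))"
    using b by (intro prod_mono) (auto simp: laplace_density_nonneg laplace_density_translate_le)
  also have "\<dots> = exp (\<Sum>j\<in>J. \<bar>s j\<bar> / b j) * (\<Prod>j\<in>J. laplace_density (b j) (x j))"
    using J by (simp add: prod.distrib exp_sum)
  also have "\<dots> \<le> exp W * (\<Prod>j\<in>J. laplace_density (b j) (x j))"
    using W b by (intro mult_right_mono prod_nonneg) (auto simp: laplace_density_nonneg)
  finally show ?thesis .
qed

lemma sets_PiM_laplace: "sets (PiM J (\<lambda>j. laplace (b j))) = sets (PiM J (\<lambda>_. borel))"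
  by (intro sets_PiM_cong) (simp_all add: laplace_def)

lemma measurable_translate_PiM_laplace:
  "(\<lambda>x. \<lambda>j\<in>J. s j + x j) \<in> measurable (PiM J (\<lambda>j. laplace (b j))) (PiM J (\<lambda>j. laplace (b j)))"
  unfolding measurable_cong_sets[OF sets_PiM_laplace sets_PiM_laplace] by measurable

lemma product_prob_space_laplace:
  "(\<And>j. 0 < b j) \<Longrightarrow> product_prob_space (\<lambda>j. laplace (b j))"
  by (simp add: product_prob_space_def product_prob_space_axioms_def product_sigma_finite_def
      prob_space_imp_sigma_finite prob_space_laplace)

lemma indicator_PiE_prod:
  fixes x :: "'i \<Rightarrow> 'a"
  assumes "x \<in> extensional J" "finite J"
  shows "(indicator (Pi\<^sub>E J A) x :: ennreal) = (\<Prod>j\<in>J. indicator (A j) (x j))"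
proof (cases "x \<in> Pi\<^sub>E J A")
  case True
  then show ?thesis by (auto simp: indicator_def PiE_iff intro!: prod.neutral)
next
  case False
  with assms obtain j where "j \<in> J" "x j \<notin> A j" by (auto simp: PiE_iff)
  then have "(\<Prod>j\<in>J. (indicator (A j) (x j) :: ennreal)) = 0"
    using assms(2) by (auto intro!: prod_zero_iff[THEN iffD2] simp: indicator_def)
  with False show ?thesis by simp
qed

lemma PiM_density_lborel:
  fixes h :: "'i \<Rightarrow> real \<Rightarrow> real" and J :: "'i set"
  assumes J: "finite J" and h_nonneg: "\<And>j x. 0 \<le> h j x"
    and h_measurable: "\<And>j. h j \<in> borel_measurable borel"
  shows "PiM J (\<lambda>j. density lborel (\<lambda>x. ennreal (h j x)))
       = density (PiM J (\<lambda>_. lborel)) (\<lambda>x. \<Prod>j\<in>J. ennreal (h j (x j)))"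
proof -
  let ?M = "\<lambda>j. density lborel (\<lambda>x. ennreal (h j x))"
  let ?L = "PiM J (\<lambda>_. lborel::real measure)"
  let ?f = "\<lambda>x. \<Prod>j\<in>J. ennreal (h j (x j))"
  interpret D: product_sigma_finite ?M
    unfolding product_sigma_finite_def using h_measurable
    by (auto intro: sigma_finite_measure.sigma_finite_iff_density_finite[OF sigma_finite_lborel, THEN iffD2])
  interpret L: product_sigma_finite "\<lambda>_::'i. lborel::real measure"
    unfolding product_sigma_finite_def by (auto intro: lborel.sigma_finite_measure_axioms)
  have f_measurable: "?f \<in> borel_measurable ?L"
    using h_measurable by measurable
  show ?thesis
  proof (rule sym, rule D.PiM_eqI)
    show "sets (density ?L ?f) = sets (PiM J ?M)"
      unfolding sets_density by (intro sets_PiM_cong) auto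
  next
    fix A assume A: "\<And>i. i \<in> J \<Longrightarrow> A i \<in> sets (?M i)"
    have "Pi\<^sub>E J A \<in> sets ?L"
      using A by (intro sets_PiM_I_finite J) auto
    then have "emeasure (density ?L ?f) (Pi\<^sub>E J A) = (\<integral>\<^sup>+x. ?f x * indicator (Pi\<^sub>E J A) x \<partial>?L)"
      using f_measurable by (intro emeasure_density)
    also have "\<dots> = (\<integral>\<^sup>+x. (\<Prod>j\<in>J. ennreal (h j (x j)) * indicator (A j) (x j)) \<partial>?L)"
      using J by (intro nn_integral_cong) (simp add: space_PiM PiE_iff indicator_PiE_prod prod.distrib)
    also have "\<dots> = (\<Prod>j\<in>J. \<integral>\<^sup>+y. ennreal (h j y) * indicator (A j) y \<partial>lborel)"
      using A h_measurable by (intro L.product_nn_integral_prod J) auto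
    also have "\<dots> = (\<Prod>j\<in>J. emeasure (?M j) (A j))"
      using A h_measurable by (intro prod.cong refl) (auto simp: emeasure_density)
    finally show "emeasure (density ?L ?f) (Pi\<^sub>E J A) = (\<Prod>j\<in>J. emeasure (?M j) (A j))" .
  qed fact
qed

lemma distr_PiM_lborel_translate:
  fixes s :: "'i \<Rightarrow> real" and J :: "'i set"
  assumes J: "finite J"
  shows "distr (PiM J (\<lambda>_. lborel)) (PiM J (\<lambda>_. lborel)) (\<lambda>x. \<lambda>j\<in>J. s j + x j) = PiM J (\<lambda>_. lborel::real measure)"
proof -
  let ?L = "PiM J (\<lambda>_. lborel::real measure)"
  let ?T = "\<lambda>x. \<lambda>j\<in>J. s j + x j"
  interpret L: product_sigma_finite "\<lambda>_::'i. lborel::real measure"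
    unfolding product_sigma_finite_def by (auto intro: lborel.sigma_finite_measure_axioms)
  have T_measurable: "?T \<in> measurable ?L ?L"
    by measurable
  show ?thesis
  proof (rule L.PiM_eqI)
    fix A assume A: "\<And>i. i \<in> J \<Longrightarrow> A i \<in> sets (lborel::real measure)"
    have shifted: "(+) (s j) -` A j \<in> sets borel" if "j \<in> J" for j
      using measurable_sets[of "(+) (s j)" borel borel "A j"] A[OF that] by simp
    have "?T -` Pi\<^sub>E J A \<inter> space ?L = Pi\<^sub>E J (\<lambda>j. (+) (s j) -` A j)"
      by (auto simp: space_PiM PiE_iff extensional_def)
    then have "emeasure (distr ?L ?L ?T) (Pi\<^sub>E J A) = emeasure ?L (Pi\<^sub>E J (\<lambda>j. (+) (s j) -` A j))"
      using A J shifted by (subst emeasure_distr[OF T_measurable]) (auto intro!: sets_PiM_I_finite)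
    also have "\<dots> = (\<Prod>j\<in>J. emeasure lborel ((+) (s j) -` A j))"
      using A J shifted by (intro L.emeasure_PiM) auto
    also have "\<dots> = (\<Prod>j\<in>J. emeasure lborel (A j))"
    proof (intro prod.cong refl)
      fix j assume "j \<in> J"
      then have "emeasure (distr lborel borel ((+) (s j))) (A j) = emeasure lborel ((+) (s j) -` A j)"
        using A by (subst emeasure_distr) auto
      then show "emeasure lborel ((+) (s j) -` A j) = emeasure lborel (A j)"
        by (simp add: lborel_distr_plus)
    qed
    finally show "emeasure (distr ?L ?L ?T) (Pi\<^sub>E J A) = (\<Prod>j\<in>J. emeasure lborel (A j))" .
  qed (use J in simp_all)
qed

lemma emeasure_PiM_laplace_translate_le:
  fixes b s :: "'i \<Rightarrow> real" and J :: "'i set"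
  assumes J: "finite J" and b: "\<And>j. 0 < b j" and W: "(\<Sum>j\<in>J. \<bar>s j\<bar> / b j) \<le> W"
    and X: "X \<in> sets (PiM J (\<lambda>j. laplace (b j)))"
  shows "emeasure (PiM J (\<lambda>j. laplace (b j)))
      ((\<lambda>x. \<lambda>j\<in>J. s j + x j) -` X \<inter> space (PiM J (\<lambda>j. laplace (b j))))
    \<le> ennreal (exp W) * emeasure (PiM J (\<lambda>j. laplace (b j))) X"
proof -
  let ?L = "PiM J (\<lambda>_. lborel::real measure)"
  let ?f = "\<lambda>x. \<Prod>j\<in>J. ennreal (laplace_density (b j) (x j))"
  let ?T = "\<lambda>x. \<lambda>j\<in>J. s j + x j"
  have P_eq: "PiM J (\<lambda>j. laplace (b j)) = density ?L ?f"
    unfolding laplace_eq_density using J b by (intro PiM_density_lborel) (auto simp: laplace_density_nonneg)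
  have f_measurable: "?f \<in> borel_measurable ?L" by measurable
  have T_measurable: "?T \<in> measurable ?L ?L" by measurable
  have X_sets: "X \<in> sets ?L" using X by (simp add: P_eq)
  have "emeasure (density ?L ?f) (?T -` X \<inter> space ?L) = (\<integral>\<^sup>+x. ?f x * indicator (?T -` X \<inter> space ?L) x \<partial>?L)"
    using f_measurable T_measurable X_sets by (intro emeasure_density) auto
  also have "\<dots> = (\<integral>\<^sup>+x. ?f (\<lambda>j\<in>J. ?T x j - s j) * indicator X (?T x) \<partial>?L)"
    by (intro nn_integral_cong) (auto simp: space_PiM PiE_def extensional_def indicator_def intro!: prod.cong)
  also have "\<dots> = (\<integral>\<^sup>+y. ?f (\<lambda>j\<in>J. y j - s j) * indicator X y \<partial>distr ?L ?L ?T)"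
    using T_measurable X_sets by (subst nn_integral_distr) auto
  also have "\<dots> = (\<integral>\<^sup>+y. ?f (\<lambda>j\<in>J. y j - s j) * indicator X y \<partial>?L)"
    by (simp add: distr_PiM_lborel_translate[OF J])
  also have "\<dots> \<le> (\<integral>\<^sup>+y. ennreal (exp W) * (?f y * indicator X y) \<partial>?L)"
  proof (intro nn_integral_mono)
    fix y
    have "?f (\<lambda>j\<in>J. y j - s j) = ennreal (\<Prod>j\<in>J. laplace_density (b j) (y j - s j))"
      using b by (simp add: prod_ennreal laplace_density_nonneg)
    also have "\<dots> \<le> ennreal (exp W * (\<Prod>j\<in>J. laplace_density (b j) (y j)))"
      using prod_laplace_density_translate_le[OF J b W] by (rule ennreal_leI)
    also have "\<dots> = ennreal (exp W) * ?f y"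
      using b by (simp add: ennreal_mult prod_ennreal prod_nonneg laplace_density_nonneg)
    finally show "?f (\<lambda>j\<in>J. y j - s j) * indicator X y \<le> ennreal (exp W) * (?f y * indicator X y)"
      by (auto simp: indicator_def)
  qed
  also have "\<dots> = ennreal (exp W) * emeasure (density ?L ?f) X"
    using f_measurable X_sets by (simp add: nn_integral_cmult emeasure_density)
  finally show ?thesis by (simp add: P_eq)
qed

lemma (in finite_measure) eventually_measure_Diff_UN_lessThan_less:
  assumes a: "range a \<subseteq> sets M" and e: "0 < e"
  shows "eventually (\<lambda>n. measure M ((\<Union>i. a i) - (\<Union>i<n. a i)) < e) sequentially"
proof -
  have "incseq (\<lambda>n. \<Union>i<n. a i)"
    by (auto simp: incseq_def intro: order_less_le_trans)
  then have "(\<lambda>n. measure M (\<Union>i<n. a i)) \<longlonglongrightarrow> measure M (\<Union>n. \<Union>i<n. a i)"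
    using a by (intro finite_Lim_measure_incseq) auto
  moreover have "(\<Union>n. \<Union>i<n. a i) = (\<Union>i. a i)" by auto
  ultimately have "(\<lambda>n. measure M (\<Union>i<n. a i)) \<longlonglongrightarrow> measure M (\<Union>i. a i)"
    by simp
  then have "(\<lambda>n. measure M (\<Union>i. a i) - measure M (\<Union>i<n. a i))
      \<longlonglongrightarrow> measure M (\<Union>i. a i) - measure M (\<Union>i. a i)"
    by (intro tendsto_diff tendsto_const)
  moreover have "measure M ((\<Union>i. a i) - (\<Union>i<n. a i)) = measure M (\<Union>i. a i) - measure M (\<Union>i<n. a i)" for n
    using a by (intro finite_measure_Diff) auto
  ultimately show ?thesis
    using e by (simp add: order_tendstoD(2))
qed

lemma (in finite_measure) measure_sym_diff_UN_less:
  assumes a: "range a \<subseteq> sets M" and C: "range C \<subseteq> sets M" and n: "0 < n"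
    and close: "\<And>i. measure M (sym_diff (a i) (C i)) < e / (2 * real n)"
    and tail: "measure M ((\<Union>i. a i) - (\<Union>i<n. a i)) < e / 2"
  shows "measure M (sym_diff (\<Union>i. a i) (\<Union>i<n. C i)) < e"
proof -
  have "measure M (sym_diff (\<Union>i. a i) (\<Union>i<n. C i))
      \<le> measure M (((\<Union>i. a i) - (\<Union>i<n. a i)) \<union> (\<Union>i<n. sym_diff (a i) (C i)))"
    using a C by (intro finite_measure_mono) auto
  also have "\<dots> \<le> measure M ((\<Union>i. a i) - (\<Union>i<n. a i)) + measure M (\<Union>i<n. sym_diff (a i) (C i))"
    using a C by (intro measure_Un_le) auto
  also have "measure M (\<Union>i<n. sym_diff (a i) (C i)) \<le> (\<Sum>i<n. measure M (sym_diff (a i) (C i)))"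
    using a C by (intro finite_measure_subadditive_finite) auto
  also have "\<dots> < (\<Sum>i<n. e / (2 * real n))"
    using n close by (intro sum_strict_mono) auto
  also have "\<dots> = e / 2" using n by simp
  finally show ?thesis using tail by linarith
qed

lemma algebra_approx_UN:
  fixes a :: "nat \<Rightarrow> 'a set"
  assumes \<mu>: "finite_measure \<mu>" and \<nu>: "finite_measure \<nu>" and G: "algebra \<Omega> G"
    and G_\<mu>: "G \<subseteq> sets \<mu>" and G_\<nu>: "G \<subseteq> sets \<nu>"
    and a_\<mu>: "range a \<subseteq> sets \<mu>" and a_\<nu>: "range a \<subseteq> sets \<nu>"
    and approx: "\<And>i e. 0 < e \<Longrightarrow> \<exists>A\<in>G. measure \<mu> (sym_diff (a i) A) < e \<and> measure \<nu> (sym_diff (a i) A) < e"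
    and e: "0 < e"
  shows "\<exists>A\<in>G. measure \<mu> (sym_diff (\<Union>i. a i) A) < e \<and> measure \<nu> (sym_diff (\<Union>i. a i) A) < e"
proof -
  obtain n where n: "0 < n"
    and tail_\<mu>: "measure \<mu> ((\<Union>i. a i) - (\<Union>i<n. a i)) < e / 2"
    and tail_\<nu>: "measure \<nu> ((\<Union>i. a i) - (\<Union>i<n. a i)) < e / 2"
    using eventually_conj[OF eventually_gt_at_top[of 0] eventually_conj[OF
        finite_measure.eventually_measure_Diff_UN_lessThan_less[OF \<mu> a_\<mu>, of "e / 2"]
        finite_measure.eventually_measure_Diff_UN_lessThan_less[OF \<nu> a_\<nu>, of "e / 2"]]] e
    by (auto simp: eventually_sequentially)
  have "0 < e / (2 * real n)" using n e by simp
  then obtain C where C: "\<And>i. C i \<in> G"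
    and close_\<mu>: "\<And>i. measure \<mu> (sym_diff (a i) (C i)) < e / (2 * real n)"
    and close_\<nu>: "\<And>i. measure \<nu> (sym_diff (a i) (C i)) < e / (2 * real n)"
    using approx by metis
  have "measure \<mu> (sym_diff (\<Union>i. a i) (\<Union>i<n. C i)) < e"
    "measure \<nu> (sym_diff (\<Union>i. a i) (\<Union>i<n. C i)) < e"
    using C G_\<mu> G_\<nu> n close_\<mu> close_\<nu> tail_\<mu> tail_\<nu>
    by (auto intro!: finite_measure.measure_sym_diff_UN_less[OF \<mu> a_\<mu>]
        finite_measure.measure_sym_diff_UN_less[OF \<nu> a_\<nu>])
  moreover have "(\<Union>i<n. C i) \<in> G"
    using C algebra.axioms(1)[OF G] by (auto intro: ring_of_sets.finite_UN)
  ultimately show ?thesis by blast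
qed

lemma sigma_sets_approx_by_algebra:
  assumes \<mu>: "finite_measure \<mu>" and \<nu>: "finite_measure \<nu>" and G: "algebra \<Omega> G"
    and sets_\<mu>: "sigma_sets \<Omega> G \<subseteq> sets \<mu>" and sets_\<nu>: "sigma_sets \<Omega> G \<subseteq> sets \<nu>"
    and B: "B \<in> sigma_sets \<Omega> G" and e: "0 < e"
  shows "\<exists>A\<in>G. measure \<mu> (sym_diff B A) < e \<and> measure \<nu> (sym_diff B A) < e"
proof -
  interpret G: algebra \<Omega> G by (rule G)
  have G_\<mu>: "G \<subseteq> sets \<mu>" and G_\<nu>: "G \<subseteq> sets \<nu>"
    using sets_\<mu> sets_\<nu> by auto
  show ?thesis
    using B e
  proof (induction arbitrary: e)
    case (Basic a)
    then show ?case by force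
  next
    case Empty
    then show ?case using G.empty_sets by force
  next
    case (Compl a)
    then obtain A where A: "A \<in> G" "measure \<mu> (sym_diff a A) < e" "measure \<nu> (sym_diff a A) < e"
      by blast
    have same: "sym_diff (\<Omega> - a) (\<Omega> - A) \<subseteq> sym_diff a A" by blast
    have "A \<in> sigma_sets \<Omega> G" using A(1) by (rule sigma_sets.Basic)
    then have "measure \<mu> (sym_diff (\<Omega> - a) (\<Omega> - A)) \<le> measure \<mu> (sym_diff a A)"
      "measure \<nu> (sym_diff (\<Omega> - a) (\<Omega> - A)) \<le> measure \<nu> (sym_diff a A)"
      using same Compl.hyps sets_\<mu> sets_\<nu>
      by (auto intro!: finite_measure.finite_measure_mono[OF \<mu>] finite_measure.finite_measure_mono[OF \<nu>])
    moreover have "\<Omega> - A \<in> G" using A(1) by (rule G.compl_sets)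
    ultimately show ?case using A by force
  next
    case (Union a)
    then show ?case
      using sets_\<mu> sets_\<nu> by (intro algebra_approx_UN[OF \<mu> \<nu> G G_\<mu> G_\<nu>]) auto
  qed
qed

text \<open>The sets satisfying such an inequality are not closed under complements, so Dynkin's
  \<pi>-\<lambda> argument does not apply; approximation in symmetric difference does.\<close>

lemma measure_le_mult_extend_from_algebra:
  assumes \<mu>: "finite_measure \<mu>" and \<nu>: "finite_measure \<nu>" and G: "algebra \<Omega> G"
    and sets_\<mu>: "sets \<mu> = sigma_sets \<Omega> G" and sets_\<nu>: "sets \<nu> = sigma_sets \<Omega> G"
    and K: "0 \<le> K" and le_on_G: "\<And>A. A \<in> G \<Longrightarrow> measure \<mu> A \<le> K * measure \<nu> A"
    and B: "B \<in> sets \<mu>"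
  shows "measure \<mu> B \<le> K * measure \<nu> B"
proof (rule field_le_epsilon)
  fix e :: real assume "0 < e"
  with K have "0 < e / (K + 1)" by simp
  then obtain A where A: "A \<in> G" and "measure \<mu> (sym_diff B A) < e / (K + 1)"
    and "measure \<nu> (sym_diff B A) < e / (K + 1)"
    using sigma_sets_approx_by_algebra[OF \<mu> \<nu> G _ _ B[unfolded sets_\<mu>]] sets_\<mu> sets_\<nu> by blast
  moreover have "A \<in> sets \<mu>" "A \<in> sets \<nu>" "B \<in> sets \<nu>"
    using A B sets_\<mu> sets_\<nu> by auto
  moreover have "measure \<mu> B \<le> measure \<mu> A + measure \<mu> (sym_diff B A)"
    using B \<open>A \<in> sets \<mu>\<close>
    by (intro order_trans[OF finite_measure.finite_measure_mono[OF \<mu>] measure_Un_le]) auto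
  moreover have "measure \<nu> A \<le> measure \<nu> B + measure \<nu> (sym_diff B A)"
    using \<open>B \<in> sets \<nu>\<close> \<open>A \<in> sets \<nu>\<close>
    by (intro order_trans[OF finite_measure.finite_measure_mono[OF \<nu>] measure_Un_le]) auto
  ultimately have "measure \<mu> B \<le> K * (measure \<nu> B + e / (K + 1)) + e / (K + 1)"
    using le_on_G[OF A] K by (smt (verit) mult_left_mono)
  also have "\<dots> = K * measure \<nu> B + e"
    using K by (simp add: field_simps add_nonneg_eq_0_iff)
  finally show "measure \<mu> B \<le> K * measure \<nu> B + e" .
qed

lemma measure_PiM_laplace_translate_prod_emb_le:
  fixes b s :: "'i \<Rightarrow> real" and I J :: "'i set"
  defines "M \<equiv> \<lambda>j. laplace (b j)"
  assumes b: "\<And>j. 0 < b j" and J: "finite J" "J \<subseteq> I"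
    and W: "(\<Sum>j\<in>J. \<bar>s j\<bar> / b j) \<le> W" and X: "X \<in> sets (PiM J M)"
  shows "measure (PiM I M) ((\<lambda>x. \<lambda>j\<in>I. s j + x j) -` prod_emb I M J X \<inter> space (PiM I M))
    \<le> exp W * measure (PiM I M) (prod_emb I M J X)"
proof -
  interpret product_prob_space M I
    unfolding M_def using b by (rule product_prob_space_laplace)
  let ?T = "\<lambda>x. \<lambda>j\<in>J. s j + x j"
  have "?T \<in> measurable (PiM J M) (PiM J M)"
    unfolding M_def by (rule measurable_translate_PiM_laplace)
  then have Y: "?T -` X \<inter> space (PiM J M) \<in> sets (PiM J M)"
    using X by (rule measurable_sets)
  have "restrict (\<lambda>j\<in>I. s j + x j) J = ?T (restrict x J)" for x
    using J(2) by (auto simp: fun_eq_iff)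
  then have "(\<lambda>x. \<lambda>j\<in>I. s j + x j) -` prod_emb I M J X \<inter> space (PiM I M)
      = prod_emb I M J (?T -` X \<inter> space (PiM J M))"
    by (auto simp: prod_emb_def M_def space_PiM)
  then have "emeasure (PiM I M) ((\<lambda>x. \<lambda>j\<in>I. s j + x j) -` prod_emb I M J X \<inter> space (PiM I M))
      \<le> ennreal (exp W) * emeasure (PiM I M) (prod_emb I M J X)"
    using emeasure_PiM_laplace_translate_le[OF J(1) b W X[unfolded M_def], folded M_def] J X Y
    by (simp add: emeasure_PiM_emb')
  then show ?thesis
    by (simp add: emeasure_eq_measure flip: ennreal_mult)
qed

lemma measure_PiM_laplace_translate_le_sets:
  fixes b s :: "'i \<Rightarrow> real" and I :: "'i set"
  defines "P \<equiv> PiM I (\<lambda>j. laplace (b j))"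
  assumes b: "\<And>j. 0 < b j" and W: "\<And>J. finite J \<Longrightarrow> J \<subseteq> I \<Longrightarrow> (\<Sum>j\<in>J. \<bar>s j\<bar> / b j) \<le> W"
    and B: "B \<in> sets P"
  shows "measure P ((\<lambda>x. \<lambda>j\<in>I. s j + x j) -` B \<inter> space P) \<le> exp W * measure P B"
proof -
  interpret product_prob_space "\<lambda>j. laplace (b j)" I
    using b by (rule product_prob_space_laplace)
  let ?T = "\<lambda>x. \<lambda>j\<in>I. s j + x j"
  have T_measurable: "?T \<in> measurable P P"
    unfolding P_def by (rule measurable_translate_PiM_laplace)
  have sets_P: "sets P = sigma_sets (space P) generator"
    unfolding P_def by (rule sets_PiM_generator)
  have "measure (distr P P ?T) B \<le> exp W * measure P B"
  proof (rule measure_le_mult_extend_from_algebra)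
    show "finite_measure (distr P P ?T)" "finite_measure P"
      unfolding P_def using T_measurable[unfolded P_def]
      by (auto intro: finite_measure_distr prob_space.finite_measure prob_space_P)
    show "algebra (space P) generator"
      unfolding P_def by (rule algebra_generator)
    fix A assume "A \<in> generator"
    then obtain J X where "finite J" "J \<subseteq> I" "X \<in> sets (PiM J (\<lambda>j. laplace (b j)))"
      and A: "A = prod_emb I (\<lambda>j. laplace (b j)) J X"
      by (auto elim!: generator.cases)
    with b W have "measure P (?T -` A \<inter> space P) \<le> exp W * measure P A"
      unfolding P_def by (blast intro: measure_PiM_laplace_translate_prod_emb_le)
    then show "measure (distr P P ?T) A \<le> exp W * measure P A"
      using \<open>A \<in> generator\<close> sets_P T_measurable by (simp add: measure_distr)
  qed (use B sets_P in auto)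
  then show ?thesis
    using T_measurable B by (simp add: measure_distr)
qed

lemma measure_PiM_laplace_translate_le:
  fixes b s :: "'i \<Rightarrow> real" and I :: "'i set"
  defines "P \<equiv> PiM I (\<lambda>j. laplace (b j))"
  assumes b: "\<And>j. 0 < b j" and W: "\<And>J. finite J \<Longrightarrow> J \<subseteq> I \<Longrightarrow> (\<Sum>j\<in>J. \<bar>s j\<bar> / b j) \<le> W"
    and B: "B \<subseteq> space P"
  shows "measure P ((\<lambda>x. \<lambda>j\<in>I. s j + x j) -` B \<inter> space P) \<le> exp W * measure P B"
proof (cases "B \<in> sets P")
  case True
  with b W show ?thesis
    unfolding P_def by (rule measure_PiM_laplace_translate_le_sets)
next
  case False
  let ?T = "\<lambda>x. \<lambda>j\<in>I. s j + x j" and ?T' = "\<lambda>x. \<lambda>j\<in>I. - s j + x j"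
  have space_P: "space P = PiE I (\<lambda>_. UNIV)"
    by (simp add: P_def space_PiM)
  have "?T (?T' x) = x" if "x \<in> space P" for x
    using that by (auto simp: space_P PiE_def extensional_def fun_eq_iff)
  then have "?T' -` (?T -` B \<inter> space P) \<inter> space P = B"
    using B by (auto simp: space_P)
  moreover have "?T' -` S \<inter> space P \<in> sets P" if "S \<in> sets P" for S
    using measurable_translate_PiM_laplace that unfolding P_def by (rule measurable_sets)
  ultimately have "?T -` B \<inter> space P \<notin> sets P"
    using False by metis
  then show ?thesis
    by (simp add: measure_notin_sets False)
qed

lemma sum_power_le_geometric:
  fixes r :: real
  assumes "finite T" "0 \<le> r" "r < 1"
  shows "(\<Sum>t\<in>T. r ^ t) \<le> 1 / (1 - r)"
proof -
  have "(\<Sum>t\<in>T. r ^ t) \<le> (\<Sum>t. r ^ t)"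
    using assms by (intro sum_le_suminf summable_geometric) auto
  then show ?thesis
    using assms by (simp add: suminf_geometric)
qed

lemma sum_geometric_decay_over_scale_le:
  fixes J :: "(nat \<times> nat) set" and c q \<sigma>k \<sigma>m D \<delta> :: real
  assumes J: "finite J" and c: "0 < c" and q: "0 < q" and \<sigma>k: "0 < \<sigma>k" "\<sigma>k < 1"
    and \<sigma>m: "\<sigma>m \<le> \<sigma>k" "1 - \<sigma>m < q" and D: "\<bar>D\<bar> \<le> \<delta>"
  shows "(\<Sum>(i, t)\<in>J. \<bar>if i = k then (1 - \<sigma>k) ^ t * D else 0\<bar> / (c * q ^ t))
    \<le> q / (c * (q + \<sigma>m - 1)) * \<delta>"
proof -
  define r where "r = (1 - \<sigma>k) / q"
  have r: "0 \<le> r" "r < 1"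
    using \<sigma>k \<sigma>m q by (simp_all add: r_def field_simps)
  have inj: "inj_on snd (J \<inter> {k} \<times> UNIV)"
    by (auto simp: inj_on_def)
  have "(\<Sum>(i, t)\<in>J. \<bar>if i = k then (1 - \<sigma>k) ^ t * D else 0\<bar> / (c * q ^ t))
      = (\<Sum>(i, t)\<in>J \<inter> {k} \<times> UNIV. \<bar>D\<bar> / c * r ^ t)"
    using J \<sigma>k by (intro sum.mono_neutral_cong_right)
      (auto simp: r_def abs_mult power_abs power_divide split: if_splits)
  also have "\<dots> = \<bar>D\<bar> / c * (\<Sum>t\<in>snd ` (J \<inter> {k} \<times> UNIV). r ^ t)"
    using inj by (simp add: sum_distrib_left sum.reindex case_prod_unfold)
  also have "\<dots> \<le> \<bar>D\<bar> / c * (1 / (1 - r))"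
    using J r c by (intro mult_left_mono sum_power_le_geometric) auto
  also have "1 / (1 - r) = q / (q + \<sigma>k - 1)"
    using q r by (simp add: r_def field_simps)
  also have "\<bar>D\<bar> / c * (q / (q + \<sigma>k - 1)) \<le> \<delta> / c * (q / (q + \<sigma>m - 1))"
    using D c q \<sigma>m by (intro mult_mono divide_right_mono divide_left_mono mult_pos_pos) auto
  also have "\<dots> = q / (c * (q + \<sigma>m - 1)) * \<delta>"
    by (simp add: field_simps)
  finally show ?thesis .
qed

lemma nbrs_Un_self_subset:
  assumes "undirected_graph N E" "i < N"
  shows "nbrs E i \<union> {i} \<subseteq> {..<N}"
  using assms by (auto simp: undirected_graph_def nbrs_def)

lemma dtheta_perturb:
  assumes G: "undirected_graph N E"
    and init: "\<And>j. j < N \<Longrightarrow> \<theta>0' j = \<theta>0 j - d 0 j"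
    and step: "\<And>t i. i < N \<Longrightarrow> d (Suc t) i = (1 - \<sigma> i) * d t i"
    and noise: "\<And>t i. i < N \<Longrightarrow> \<eta>' (i, t) = \<eta> (i, t) + d t i"
  shows "i < N \<Longrightarrow> dtheta E \<sigma> \<theta>0' \<eta>' t i = dtheta E \<sigma> \<theta>0 \<eta> t i - d t i"
proof (induction t arbitrary: i)
  case 0
  then show ?case using init by simp
next
  case (Suc t)
  let ?avg = "(\<Sum>j \<in> nbrs E i \<union> {i}. dtheta E \<sigma> \<theta>0 \<eta> t j + \<eta> (j, t)) / (real (card (nbrs E i)) + 1)"
  have "(\<Sum>j \<in> nbrs E i \<union> {i}. dtheta E \<sigma> \<theta>0' \<eta>' t j + \<eta>' (j, t))
      = (\<Sum>j \<in> nbrs E i \<union> {i}. dtheta E \<sigma> \<theta>0 \<eta> t j + \<eta> (j, t))"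
    using nbrs_Un_self_subset[OF G Suc.prems] Suc.IH noise by (intro sum.cong) auto
  then have "dtheta E \<sigma> \<theta>0' \<eta>' (Suc t) i = (1 - \<sigma> i) * (dtheta E \<sigma> \<theta>0 \<eta> t i - d t i) + \<sigma> i * ?avg"
    using Suc.IH[OF Suc.prems] by simp
  also have "\<dots> = dtheta E \<sigma> \<theta>0 \<eta> (Suc t) i - d (Suc t) i"
    using step[OF Suc.prems] by (simp add: algebra_simps)
  finally show ?case .
qed

lemma observe_perturb:
  assumes G: "undirected_graph N E" and C: "C \<subseteq> {..<N}"
    and init: "\<And>j. j < N \<Longrightarrow> \<theta>0' j = \<theta>0 j - d 0 j"
    and step: "\<And>t i. i < N \<Longrightarrow> d (Suc t) i = (1 - \<sigma> i) * d t i"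
    and noise: "\<And>t i. i < N \<Longrightarrow> \<eta>' (i, t) = \<eta> (i, t) + d t i"
    and unobserved: "\<And>t j. j \<in> C \<Longrightarrow> d t j = 0"
  shows "observe N E C \<sigma> \<theta>0' \<eta>' = observe N E C \<sigma> \<theta>0 \<eta>"
proof -
  have dtheta: "dtheta E \<sigma> \<theta>0' \<eta>' t i = dtheta E \<sigma> \<theta>0 \<eta> t i - d t i" if "i < N" for t i
    using G init step noise that by (rule dtheta_perturb)
  have dmsg: "dmsg E \<sigma> \<theta>0' \<eta>' t i = dmsg E \<sigma> \<theta>0 \<eta> t i" if "i < N" for t i
    using dtheta[OF that] noise[OF that] by (simp add: dmsg_def)
  have dy: "dy E \<sigma> \<theta>0' \<eta>' t j = dy E \<sigma> \<theta>0 \<eta> t j" if "j < N" for t j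
    unfolding dy_def using nbrs_Un_self_subset[OF G that] dmsg by (intro arg_cong2[of _ _ _ _ "(/)"] sum.cong) auto
  show ?thesis
    unfolding observe_def using C
    by (auto intro!: restrict_ext simp: dmsg dtheta dy unobserved)
qed

theorem mainTheorem5:
  fixes N :: nat and E :: "(nat \<times> nat) set" and \<sigma> :: "nat \<Rightarrow> real"
    and c q \<delta> :: real and C :: "nat set" and k :: nat
    and \<theta>0 \<theta>0' :: "nat \<Rightarrow> real" and Obs :: "observation set"
  assumes "N > 0"
    and "undirected_graph N E"
    and "\<forall>i < N. 0 < \<sigma> i \<and> \<sigma> i < 1"
    and "c > 0"
    and "1 - Min (\<sigma> ` {..<N}) < q" and "q < 1"
    and "C \<subseteq> {..<N}"
    and "k < N" and "k \<notin> C"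
    and "\<delta> \<ge> 0"
    and "\<forall>i < N. i \<noteq> k \<longrightarrow> \<theta>0 i = \<theta>0' i"
    and "\<bar>\<theta>0 k - \<theta>0' k\<bar> \<le> \<delta>"
    and "Obs \<in> sets (obs_space N C)"
  shows "obs_prob N E C \<sigma> c q \<theta>0 Obs
     \<le> exp (q / (c * (q + Min (\<sigma> ` {..<N}) - 1)) * \<delta>) * obs_prob N E C \<sigma> c q \<theta>0' Obs"
proof -
  define \<sigma>m where "\<sigma>m = Min (\<sigma> ` {..<N})"
  define I where "I = {..<N} \<times> (UNIV :: nat set)"
  define b where "b = (\<lambda>(i::nat, t::nat). c * q ^ t)"
  define s where "s = (\<lambda>(i::nat, t::nat). if i = k then (1 - \<sigma> k) ^ t * (\<theta>0 k - \<theta>0' k) else 0)"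
  define P where "P = PiM I (\<lambda>j. laplace (b j))"
  let ?T = "\<lambda>\<eta>. \<lambda>j\<in>I. s j + \<eta> j"
  let ?A = "\<lambda>\<theta>. {\<eta> \<in> space P. observe N E C \<sigma> \<theta> \<eta> \<in> Obs}"
  have \<sigma>m: "\<sigma>m \<le> \<sigma> k" "1 - \<sigma>m < q"
    using assms(5,8) unfolding \<sigma>m_def by (auto intro: Min_le)
  have \<sigma>k: "0 < \<sigma> k" "\<sigma> k < 1"
    using assms(3,8) by auto
  with \<sigma>m have q: "0 < q" by linarith
  have noise: "noise_space N c q = P"
    by (simp add: noise_space_def P_def I_def b_def case_prod_unfold)
  have budget: "(\<Sum>j\<in>J. \<bar>s j\<bar> / b j) \<le> q / (c * (q + \<sigma>m - 1)) * \<delta>" if "finite J" for J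
    using sum_geometric_decay_over_scale_le[OF that assms(4) q \<sigma>k \<sigma>m assms(12), of k]
    by (simp add: s_def b_def case_prod_unfold)
  have "observe N E C \<sigma> \<theta>0' (?T \<eta>) = observe N E C \<sigma> \<theta>0 \<eta>" for \<eta>
    by (rule observe_perturb[OF assms(2,7), where d = "\<lambda>t i. s (i, t)"])
      (use assms(9,11) in \<open>auto simp: s_def I_def\<close>)
  then have same_event: "?A \<theta>0 = ?T -` ?A \<theta>0' \<inter> space P"
    by (auto simp: P_def space_PiM)
  have "0 < b j" for j
    using assms(4) q by (simp add: b_def case_prod_unfold)
  \<comment> \<open>The translation bound holds for arbitrary events.\<close>
  then have "measure P (?T -` ?A \<theta>0' \<inter> space P) \<le> exp (q / (c * (q + \<sigma>m - 1)) * \<delta>) * measure P (?A \<theta>0')"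
    using budget unfolding P_def by (intro measure_PiM_laplace_translate_le) auto
  then show ?thesis
    unfolding obs_prob_def noise same_event \<sigma>m_def .
qed

end
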